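(* Let $D$ be any digraph and $P$ an admissible partition of $V(D)$. Then the map $\hat\varphi_P\colon|D|\to D/P$ is continuous.
   Context: Digraphs have no loops and no parallel edges. $\mathcal{X}(D)$: finite subsets of $V(D)$. A vertex set $Y$ separates vertex sets $A,B$ if every $A$–$B$ path meets $Y$ or every $B$–$A$ path meets $Y$. A finite partition $P$ of $V(D)$ is admissible if any two distinct classes are separated by a finite vertex set. $D/P$ is the finite multi-digraph on vertex set $P$ where for distinct $p_1,p_2\in P$ there is one edge $(e,p_1,p_2)$ for each edge $e$ of $D$ from $p_1$ to $p_2$ if there are finitely many such edges, and a single quotient edge $(p_1p_2,p_1,p_2)$ if there are infinitely many; $D/P$ carries the 1-complex topology (edges are copies of $[0,1]$ glued at endvertices; basic open sets are open stars around vertices and open subintervals of edges). Ends and limit edges: a ray is a one-way infinite directed path, its tails are its subrays; a ray is solid if for every $X\in\mathcal{X}(D)$ it has a tail in a strong component of $D-X$; solid rays are equivalent if for every $X$ they have tails in the same strong component of $D-X$; classes are ends, $\Omega(D)$. $C(X,\omega)$ is the strong component of $D-X$ containing tails of rays of $\omega$ ($\omega$ lives in it); $X$ separates ends $\omega,\eta$ if $C(X,\omega)\ne C(X,\eta)$. For distinct ends, $(\omega,\eta)$ is a limit edge if for every $X$ separating them $D$ has an edge from $C(X,\omega)$ to $C(X,\eta)$; for a vertex $v$, $(v,\omega)$ (resp. $(\omega,v)$) is a limit edge if $D$ has an edge from $v$ to $C(X,\omega)$ (resp. from $C(X,\omega)$ to $v$) for all $X$ with $v\notin C(X,\omega)$.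 $\Lambda(D)$: the limit edges. $|D|$: from $V(D)\cup\Omega(D)$ and copies $[0,1]_e$, $e\in E(D)\cup\Lambda(D)$, identify tail of $e$ with $0$ and head with $1$; points on different edges correspond if they come from the same real. A limit edge lives in a strong component $C$ of $D-X$ if each endpoint is a vertex of or an end living in $C$. Topology generated by: (1) open $\varepsilon$-stars around vertices $v$ ($[0,\varepsilon)$ of edges in $E(D)\cup\Lambda(D)$ with tail $v$, $(1-\varepsilon,1]$ of those with head $v$); (2) open subintervals of interiors of edges of $D$; (3) for an end $\omega$ and $X\in\mathcal{X}(D)$, $\hat C_\varepsilon(X,\omega)$: vertices and inner points of edges of $C(X,\omega)$, ends living in $C(X,\omega)$, points of limit edges living in $C(X,\omega)$, and for each edge of $E(D)\cup\Lambda(D)$ with exactly one endpoint $y$ a vertex of/end living in $C(X,\omega)$, the half-open segment of length $\varepsilon$ at $y$; (4) for an inner point $z$ of a limit edge $(\omega,\eta)$ and $X$ separating $\omega,\eta$: union of open $\varepsilon$-intervals around points corresponding to $z$ on all edges of $D$ from $C(X,\omega)$ to $C(X,\eta)$ and on limit edges with tail a vertex of/end living in $C(X,\omega)$ and head a vertex of/end living in $C(X,\eta)$; for $(v,\omega)$ with $v\in X$, analogously over edges of $D$ from $v$ to $C(X,\omega)$ and limit edges $(v,\omega')$ with $\omega'$ living in $C(X,\omega)$; symmetrically for $(\omega,v)$. $\hat\varphi_P\colon|D|\to D/P$: a vertex $v$ goes to its class; an inner point $z$ of an edge $vw$ of $D$ goes to the class of $v$ if $v,w$ lie in the same class, else to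 the corresponding point of the edge of $D/P$ from the class of $v$ to the class of $w$ (the copy of $vw$ or the quotient edge); an end $\omega$ goes to the unique class containing tails of all rays of $\omega$; an inner point $z$ of a limit edge $\lambda$ goes to the common image of the endpoints of $\lambda$ if these coincide, and otherwise (then $D$ has infinitely many edges between the two classes in the direction of $\lambda$, so $D/P$ has a quotient edge between them) to the corresponding point of that quotient edge. *)

theory Defs
  imports "HOL-Analysis.Analysis"
begin

definition digraph :: "'v set \<Rightarrow> ('v \<times> 'v) set \<Rightarrow> bool" where
  "digraph V E \<longleftrightarrow> E \<subseteq> V \<times> V \<and> (\<forall>(u,w)\<in>E. u \<noteq> w)"

definition fsets :: "'v set \<Rightarrow> 'v set set" where
  "fsets V = {X. finite X \<and> X \<subseteq> V}"

definition reach_in :: "'v set \<Rightarrow> ('v \<times> 'v) set \<Rightarrow> 'v \<Rightarrow> 'v \<Rightarrow> bool" where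
  "reach_in S E a b \<longleftrightarrow> a \<in> S \<and> b \<in> S \<and> (a, b) \<in> (E \<inter> S \<times> S)\<^sup>*"

definition separates :: "'v set \<Rightarrow> ('v \<times> 'v) set \<Rightarrow> 'v set \<Rightarrow> 'v set \<Rightarrow> 'v set \<Rightarrow> bool" where
  "separates V E Y A B \<longleftrightarrow>
     (\<forall>a\<in>A. \<forall>b\<in>B. \<not> reach_in (V - Y) E a b) \<or> (\<forall>a\<in>A. \<forall>b\<in>B. \<not> reach_in (V - Y) E b a)"

definition admissible :: "'v set \<Rightarrow> ('v \<times> 'v) set \<Rightarrow> 'v set set \<Rightarrow> bool" where
  "admissible V E P \<longleftrightarrow> finite P \<and> \<Union>P = V \<and> {} \<notin> P
     \<and> (\<forall>p\<in>P. \<forall>q\<in>P. p \<noteq> q \<longrightarrow> p \<inter> q = {})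
     \<and> (\<forall>p\<in>P. \<forall>q\<in>P. p \<noteq> q \<longrightarrow> (\<exists>Y\<in>fsets V. separates V E Y p q))"

definition scomps :: "'v set \<Rightarrow> ('v \<times> 'v) set \<Rightarrow> 'v set \<Rightarrow> 'v set set" where
  "scomps V E X = (\<lambda>v. {w. reach_in (V - X) E v w \<and> reach_in (V - X) E w v}) ` (V - X)"

definition is_ray :: "'v set \<Rightarrow> ('v \<times> 'v) set \<Rightarrow> (nat \<Rightarrow> 'v) \<Rightarrow> bool" where
  "is_ray V E R \<longleftrightarrow> inj R \<and> (\<forall>i. R i \<in> V) \<and> (\<forall>i. (R i, R (Suc i)) \<in> E)"

definition tail_in :: "(nat \<Rightarrow> 'v) \<Rightarrow> 'v set \<Rightarrow> bool" where
  "tail_in R C \<longleftrightarrow> (\<exists>k. \<forall>i\<ge>k. R i \<in> C)"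

definition solid :: "'v set \<Rightarrow> ('v \<times> 'v) set \<Rightarrow> (nat \<Rightarrow> 'v) \<Rightarrow> bool" where
  "solid V E R \<longleftrightarrow> is_ray V E R \<and> (\<forall>X\<in>fsets V. \<exists>C\<in>scomps V E X. tail_in R C)"

definition ray_equiv :: "'v set \<Rightarrow> ('v \<times> 'v) set \<Rightarrow> (nat \<Rightarrow> 'v) \<Rightarrow> (nat \<Rightarrow> 'v) \<Rightarrow> bool" where
  "ray_equiv V E R S \<longleftrightarrow> (\<forall>X\<in>fsets V. \<exists>C\<in>scomps V E X. tail_in R C \<and> tail_in S C)"

definition ends :: "'v set \<Rightarrow> ('v \<times> 'v) set \<Rightarrow> (nat \<Rightarrow> 'v) set set" where
  "ends V E = {{S. solid V E S \<and> ray_equiv V E R S} | R. solid V E R}"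

definition compE :: "'v set \<Rightarrow> ('v \<times> 'v) set \<Rightarrow> 'v set \<Rightarrow> (nat \<Rightarrow> 'v) set \<Rightarrow> 'v set" where
  "compE V E X \<omega> = (THE C. C \<in> scomps V E X \<and> (\<forall>R\<in>\<omega>. tail_in R C))"

datatype 'v node = NV 'v | NE "(nat \<Rightarrow> 'v) set"

definition nodes :: "'v set \<Rightarrow> ('v \<times> 'v) set \<Rightarrow> 'v node set" where
  "nodes V E = NV ` V \<union> NE ` ends V E"

definition limit_edges :: "'v set \<Rightarrow> ('v \<times> 'v) set \<Rightarrow> ('v node \<times> 'v node) set" where
  "limit_edges V E =
     {(NE \<omega>, NE \<eta>) | \<omega> \<eta>. \<omega> \<in> ends V E \<and> \<eta> \<in> ends V E \<and> \<omega> \<noteq> \<eta> \<and>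
        (\<forall>X\<in>fsets V. compE V E X \<omega> \<noteq> compE V E X \<eta> \<longrightarrow>
           (\<exists>(a,b)\<in>E. a \<in> compE V E X \<omega> \<and> b \<in> compE V E X \<eta>))}
   \<union> {(NV v, NE \<omega>) | v \<omega>. v \<in> V \<and> \<omega> \<in> ends V E \<and>
        (\<forall>X\<in>fsets V. v \<notin> compE V E X \<omega> \<longrightarrow> (\<exists>b. (v,b) \<in> E \<and> b \<in> compE V E X \<omega>))}
   \<union> {(NE \<omega>, NV v) | v \<omega>. v \<in> V \<and> \<omega> \<in> ends V E \<and>
        (\<forall>X\<in>fsets V. v \<notin> compE V E X \<omega> \<longrightarrow> (\<exists>a. (a,v) \<in> E \<and> a \<in> compE V E X \<omega>))}"

definition all_edges :: "'v set \<Rightarrow> ('v \<times> 'v) set \<Rightarrow> ('v node \<times> 'v node) set" where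
  "all_edges V E = {(NV u, NV w) | u w. (u,w) \<in> E} \<union> limit_edges V E"

definition node_in :: "'v set \<Rightarrow> ('v \<times> 'v) set \<Rightarrow> 'v set \<Rightarrow> 'v set \<Rightarrow> 'v node \<Rightarrow> bool" where
  "node_in V E X C x = (case x of NV v \<Rightarrow> v \<in> C | NE \<eta> \<Rightarrow> \<eta> \<in> ends V E \<and> compE V E X \<eta> = C)"

text \<open>Points: nodes, and inner points (e, t), 0 < t < 1, of edges e of E(D) \<union> Lambda(D);
  the tail of e is identified with 0 and the head with 1.\<close>
datatype 'v pt = Node "'v node" | Inner "'v node \<times> 'v node" real

definition DPoints :: "'v set \<Rightarrow> ('v \<times> 'v) set \<Rightarrow> 'v pt set" where
  "DPoints V E = Node ` nodes V E \<union> {Inner e t | e t. e \<in> all_edges V E \<and> 0 < t \<and> t < 1}"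

definition vstar :: "'v set \<Rightarrow> ('v \<times> 'v) set \<Rightarrow> 'v \<Rightarrow> real \<Rightarrow> 'v pt set" where
  "vstar V E v \<epsilon> = {Node (NV v)}
     \<union> {Inner e t | e t. e \<in> all_edges V E \<and> fst e = NV v \<and> 0 < t \<and> t < \<epsilon>}
     \<union> {Inner e t | e t. e \<in> all_edges V E \<and> snd e = NV v \<and> 1 - \<epsilon> < t \<and> t < 1}"

definition hatC :: "'v set \<Rightarrow> ('v \<times> 'v) set \<Rightarrow> 'v set \<Rightarrow> (nat \<Rightarrow> 'v) set \<Rightarrow> real \<Rightarrow> 'v pt set" where
  "hatC V E X \<omega> \<epsilon> = (let C = compE V E X \<omega>; inC = node_in V E X C in
       {Node x | x. x \<in> nodes V E \<and> inC x}
     \<union> {Inner e t | e t. e \<in> all_edges V E \<and> inC (fst e) \<and> inC (snd e) \<and> 0 < t \<and> t < 1}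
     \<union> {Inner e t | e t. e \<in> all_edges V E \<and> inC (fst e) \<and> \<not> inC (snd e) \<and> 0 < t \<and> t < \<epsilon>}
     \<union> {Inner e t | e t. e \<in> all_edges V E \<and> \<not> inC (fst e) \<and> inC (snd e) \<and> 1 - \<epsilon> < t \<and> t < 1})"

definition band :: "'v set \<Rightarrow> ('v \<times> 'v) set \<Rightarrow> ('v node \<Rightarrow> bool) \<Rightarrow> ('v node \<Rightarrow> bool) \<Rightarrow> real \<Rightarrow> real \<Rightarrow> 'v pt set" where
  "band V E Pt Ph z \<epsilon> = {Inner e t | e t. e \<in> all_edges V E \<and> Pt (fst e) \<and> Ph (snd e)
       \<and> \<bar>t - z\<bar> < \<epsilon> \<and> 0 < t \<and> t < 1}"

definition DBasis :: "'v set \<Rightarrow> ('v \<times> 'v) set \<Rightarrow> 'v pt set set" where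
  "DBasis V E =
     {DPoints V E}
   \<union> {vstar V E v \<epsilon> | v \<epsilon>. v \<in> V \<and> 0 < \<epsilon> \<and> \<epsilon> < 1}
   \<union> {{Inner (NV u, NV w) t | t. a < t \<and> t < b} | u w a b. (u,w) \<in> E \<and> 0 \<le> a \<and> a < b \<and> b \<le> 1}
   \<union> {hatC V E X \<omega> \<epsilon> | X \<omega> \<epsilon>. X \<in> fsets V \<and> \<omega> \<in> ends V E \<and> 0 < \<epsilon> \<and> \<epsilon> < 1}
   \<union> {band V E (node_in V E X (compE V E X \<omega>)) (node_in V E X (compE V E X \<eta>)) z \<epsilon>
        | X \<omega> \<eta> z \<epsilon>. (NE \<omega>, NE \<eta>) \<in> limit_edges V E \<and> X \<in> fsets V
            \<and> compE V E X \<omega> \<noteq> compE V E X \<eta> \<and> 0 < z \<and> z < 1 \<and> 0 < \<epsilon>}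
   \<union> {band V E (\<lambda>x. x = NV v) (node_in V E X (compE V E X \<omega>)) z \<epsilon>
        | X v \<omega> z \<epsilon>. (NV v, NE \<omega>) \<in> limit_edges V E \<and> X \<in> fsets V \<and> v \<in> X
            \<and> 0 < z \<and> z < 1 \<and> 0 < \<epsilon>}
   \<union> {band V E (node_in V E X (compE V E X \<omega>)) (\<lambda>x. x = NV v) z \<epsilon>
        | X v \<omega> z \<epsilon>. (NE \<omega>, NV v) \<in> limit_edges V E \<and> X \<in> fsets V \<and> v \<in> X
            \<and> 0 < z \<and> z < 1 \<and> 0 < \<epsilon>}"

definition DTop :: "'v set \<Rightarrow> ('v \<times> 'v) set \<Rightarrow> 'v pt topology" where
  "DTop V E = topology_generated_by (DBasis V E)"

definition cls :: "'v set set \<Rightarrow> 'v \<Rightarrow> 'v set" where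
  "cls P v = (THE p. p \<in> P \<and> v \<in> p)"

definition edges_between :: "('v \<times> 'v) set \<Rightarrow> 'v set \<Rightarrow> 'v set \<Rightarrow> ('v \<times> 'v) set" where
  "edges_between E p q = {(a,b) \<in> E. a \<in> p \<and> b \<in> q}"

text \<open>edges of D/P: a copy of an edge of D, or a quotient edge p1p2\<close>
datatype 'v qedge = QCopy "'v \<times> 'v" | QQuot "'v set" "'v set"

definition qedges :: "('v \<times> 'v) set \<Rightarrow> 'v set set \<Rightarrow> 'v qedge set" where
  "qedges E P =
     {QCopy (u,w) | u w. (u,w) \<in> E \<and> cls P u \<noteq> cls P w \<and> finite (edges_between E (cls P u) (cls P w))}
   \<union> {QQuot p q | p q. p \<in> P \<and> q \<in> P \<and> p \<noteq> q \<and> infinite (edges_between E p q)}"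

fun qtail :: "'v set set \<Rightarrow> 'v qedge \<Rightarrow> 'v set" where
  "qtail P (QCopy (u,w)) = cls P u"
| "qtail P (QQuot p q) = p"

fun qhead :: "'v set set \<Rightarrow> 'v qedge \<Rightarrow> 'v set" where
  "qhead P (QCopy (u,w)) = cls P w"
| "qhead P (QQuot p q) = q"

datatype 'v qpt = QV "'v set" | QI "'v qedge" real

definition QPoints :: "('v \<times> 'v) set \<Rightarrow> 'v set set \<Rightarrow> 'v qpt set" where
  "QPoints E P = QV ` P \<union> {QI e t | e t. e \<in> qedges E P \<and> 0 < t \<and> t < 1}"

text \<open>1-complex topology: open stars around vertices and open subintervals of edges\<close>
definition QBasis :: "('v \<times> 'v) set \<Rightarrow> 'v set set \<Rightarrow> 'v qpt set set" where
  "QBasis E P =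
     {QPoints E P}
   \<union> {{QV p} \<union> {QI e t | e t. e \<in> qedges E P \<and> qtail P e = p \<and> 0 < t \<and> t < \<epsilon>}
             \<union> {QI e t | e t. e \<in> qedges E P \<and> qhead P e = p \<and> 1 - \<epsilon> < t \<and> t < 1}
       | p \<epsilon>. p \<in> P \<and> 0 < \<epsilon> \<and> \<epsilon> < 1}
   \<union> {{QI e t | t. a < t \<and> t < b} | e a b. e \<in> qedges E P \<and> 0 \<le> a \<and> a < b \<and> b \<le> 1}"

definition QTop :: "('v \<times> 'v) set \<Rightarrow> 'v set set \<Rightarrow> 'v qpt topology" where
  "QTop E P = topology_generated_by (QBasis E P)"

definition node_cls :: "'v set set \<Rightarrow> 'v node \<Rightarrow> 'v set" where
  "node_cls P x = (case x of NV v \<Rightarrow> cls P v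
                   | NE \<omega> \<Rightarrow> (THE p. p \<in> P \<and> (\<forall>R\<in>\<omega>. tail_in R p)))"

definition phi :: "('v \<times> 'v) set \<Rightarrow> 'v set set \<Rightarrow> 'v pt \<Rightarrow> 'v qpt" where
  "phi E P z = (case z of
       Node x \<Rightarrow> QV (node_cls P x)
     | Inner (x, y) t \<Rightarrow>
         (if node_cls P x = node_cls P y then QV (node_cls P x)
          else (case (x, y) of
                  (NV u, NV w) \<Rightarrow>
                     if finite (edges_between E (cls P u) (cls P w)) then QI (QCopy (u, w)) t
                     else QI (QQuot (cls P u) (cls P w)) t
                | _ \<Rightarrow> QI (QQuot (node_cls P x) (node_cls P y)) t)))"

end

theory Submission
  imports Defs
begin

(*
  As P is finite, one finite vertex set X0 separates every two distinct classes, and then every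
  strong component of D - X with X0 <= X lies inside a single class. Hence an end omega has a class
  containing C(X, omega) for all such X, and the basic set hatC_eps(X0, omega) is mapped into the
  open eps-star of that class. A limit edge between two distinct classes forces infinitely many
  edges of D between them: adding the endpoints of finitely many such edges to X0 would leave no
  edge of D to witness the limit edge. So its inner points go to the quotient edge, and every inner
  point of an edge of |D| has basic neighbourhoods (an interval, or a band over some X containing X0
  that separates the endpoints) consisting of inner points of edges between the same two classes
  at nearby heights; these are mapped into a small interval of one edge of D/P, or to one vertex.
*)

lemma continuous_map_topology_generated_by_local:
  assumes "f ` (\<Union>S) \<subseteq> \<Union>S'"
    and "\<And>U z. U \<in> S' \<Longrightarrow> z \<in> \<Union>S \<Longrightarrow> f z \<in> U \<Longrightarrow> \<exists>B\<in>S. z \<in> B \<and> f ` B \<subseteq> U"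
  shows "continuous_map (topology_generated_by S) (topology_generated_by S') f"
proof (rule continuous_on_generated_topo)
  show "f ` topspace (topology_generated_by S) \<subseteq> \<Union>S'"
    using assms(1) by (simp add: topology_generated_by_topspace)
next
  fix U assume U: "U \<in> S'"
  show "openin (topology_generated_by S) (f -` U \<inter> topspace (topology_generated_by S))"
  proof (subst openin_subopen, intro ballI)
    fix z assume "z \<in> f -` U \<inter> topspace (topology_generated_by S)"
    then obtain B where "B \<in> S" "z \<in> B" "f ` B \<subseteq> U"
      using assms(2)[OF U] by (auto simp: topology_generated_by_topspace)
    then show "\<exists>T. openin (topology_generated_by S) T \<and> z \<in> T
        \<and> T \<subseteq> f -` U \<inter> topspace (topology_generated_by S)"
      by (intro exI[of _ B]) (auto simp: topology_generated_by_Basis topology_generated_by_topspace)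
  qed
qed

section \<open>Strong components and ends\<close>

lemma reach_in_trans: "reach_in S E a b \<Longrightarrow> reach_in S E b c \<Longrightarrow> reach_in S E a c"
  unfolding reach_in_def by (meson rtrancl_trans)

lemma reach_in_mono: "S \<subseteq> S' \<Longrightarrow> reach_in S E a b \<Longrightarrow> reach_in S' E a b"
  unfolding reach_in_def by (meson Int_mono Sigma_mono order_refl rtrancl_mono subsetD)

lemma separates_mono: "Y \<subseteq> Y' \<Longrightarrow> separates V E Y A B \<Longrightarrow> separates V E Y' A B"
  unfolding separates_def using reach_in_mono[of "V - Y'" "V - Y" E] by blast

lemma scomps_eq_of_mem:
  assumes "C \<in> scomps V E X" "x \<in> C"
  shows "C = {w. reach_in (V - X) E x w \<and> reach_in (V - X) E w x}"
  using assms unfolding scomps_def by (auto intro: reach_in_trans)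

lemma scomps_unique: "C \<in> scomps V E X \<Longrightarrow> C' \<in> scomps V E X \<Longrightarrow> x \<in> C \<Longrightarrow> x \<in> C' \<Longrightarrow> C = C'"
  using scomps_eq_of_mem by metis

lemma scomps_subset: "C \<in> scomps V E X \<Longrightarrow> C \<subseteq> V - X"
  unfolding scomps_def reach_in_def by auto

lemma scomps_nonempty: "C \<in> scomps V E X \<Longrightarrow> C \<noteq> {}"
  unfolding scomps_def reach_in_def by auto

lemma tail_in_meet: "tail_in R A \<Longrightarrow> tail_in R B \<Longrightarrow> A \<inter> B \<noteq> {}"
  unfolding tail_in_def by (metis disjoint_iff max.cobounded1 max.cobounded2)

lemma tail_in_mono: "tail_in R A \<Longrightarrow> A \<subseteq> B \<Longrightarrow> tail_in R B"
  unfolding tail_in_def by blast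

lemma ends_obtain_rep:
  assumes "\<omega> \<in> ends V E"
  obtains R where "solid V E R" "R \<in> \<omega>" "\<omega> = {S. solid V E S \<and> ray_equiv V E R S}"
  using assms unfolding ends_def ray_equiv_def solid_def by blast

lemma end_tails_in_scomp:
  assumes \<omega>: "\<omega> \<in> ends V E" and X: "X \<in> fsets V"
    and C: "C \<in> scomps V E X" and R: "R \<in> \<omega>" "tail_in R C" and S: "S \<in> \<omega>"
  shows "tail_in S C"
proof -
  obtain R0 where R0: "\<omega> = {S. solid V E S \<and> ray_equiv V E R0 S}"
    using ends_obtain_rep[OF \<omega>] by blast
  obtain C' where C': "C' \<in> scomps V E X" "tail_in R0 C'" "tail_in S C'"
    using S X R0 unfolding ray_equiv_def by blast
  obtain C'' where C'': "C'' \<in> scomps V E X" "tail_in R0 C''" "tail_in R C''"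
    using R(1) X R0 unfolding ray_equiv_def by blast
  have "C'' = C" using scomps_unique[OF C''(1) C] tail_in_meet[OF C''(3) R(2)] by blast
  moreover have "C' = C''" using scomps_unique[OF C'(1) C''(1)] tail_in_meet[OF C'(2) C''(2)] by blast
  ultimately show ?thesis using C'(3) by simp
qed

lemma compE_eqI:
  assumes \<omega>: "\<omega> \<in> ends V E" and X: "X \<in> fsets V"
    and C: "C \<in> scomps V E X" and R: "R \<in> \<omega>" "tail_in R C"
  shows "compE V E X \<omega> = C"
  unfolding compE_def
proof (rule the_equality)
  show "C \<in> scomps V E X \<and> (\<forall>S\<in>\<omega>. tail_in S C)"
    using C end_tails_in_scomp[OF assms] by blast
next
  fix C' assume "C' \<in> scomps V E X \<and> (\<forall>S\<in>\<omega>. tail_in S C')"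
  then show "C' = C" using scomps_unique[OF _ C] tail_in_meet[OF _ R(2)] R(1) by blast
qed

lemma compE_props:
  assumes "\<omega> \<in> ends V E" "X \<in> fsets V"
  shows compE_in_scomps: "compE V E X \<omega> \<in> scomps V E X"
    and tail_in_compE: "S \<in> \<omega> \<Longrightarrow> tail_in S (compE V E X \<omega>)"
proof -
  obtain R C where RC: "R \<in> \<omega>" "C \<in> scomps V E X" "tail_in R C"
    using ends_obtain_rep[OF assms(1)] assms(2) unfolding solid_def by metis
  then have "compE V E X \<omega> = C" using compE_eqI[OF assms] by blast
  then show "compE V E X \<omega> \<in> scomps V E X" "S \<in> \<omega> \<Longrightarrow> tail_in S (compE V E X \<omega>)"
    using RC end_tails_in_scomp[OF assms RC(2,1,3)] by auto
qed

lemma end_mem_iff: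
  assumes "\<omega> \<in> ends V E"
  shows "S \<in> \<omega> \<longleftrightarrow> solid V E S \<and> (\<forall>X\<in>fsets V. tail_in S (compE V E X \<omega>))"
proof -
  obtain R where R: "R \<in> \<omega>" "\<omega> = {S. solid V E S \<and> ray_equiv V E R S}"
    using ends_obtain_rep[OF assms] by blast
  have "ray_equiv V E R S" if "\<forall>X\<in>fsets V. tail_in S (compE V E X \<omega>)"
    using that compE_props[OF assms] R(1) unfolding ray_equiv_def by blast
  then show ?thesis using R tail_in_compE[OF assms] by blast
qed

lemma ends_separated:
  assumes "\<omega> \<in> ends V E" "\<eta> \<in> ends V E" "\<omega> \<noteq> \<eta>"
  shows "\<exists>X\<in>fsets V. compE V E X \<omega> \<noteq> compE V E X \<eta>"
proof (rule ccontr)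
  assume "\<not> ?thesis"
  then have "S \<in> \<omega> \<longleftrightarrow> S \<in> \<eta>" for S
    using end_mem_iff[OF assms(1)] end_mem_iff[OF assms(2)] by auto
  with assms(3) show False by blast
qed

lemma compE_antimono:
  assumes \<omega>: "\<omega> \<in> ends V E" and X: "X \<in> fsets V" "X' \<in> fsets V" "X \<subseteq> X'"
  shows "compE V E X' \<omega> \<subseteq> compE V E X \<omega>"
proof
  let ?C = "compE V E X \<omega>" and ?C' = "compE V E X' \<omega>"
  obtain R where "R \<in> \<omega>" using ends_obtain_rep[OF \<omega>] by blast
  then obtain m where m: "m \<in> ?C" "m \<in> ?C'"
    using tail_in_meet tail_in_compE[OF \<omega> X(1)] tail_in_compE[OF \<omega> X(2)] by blast
  fix d assume "d \<in> ?C'"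
  then have "reach_in (V - X') E m d" "reach_in (V - X') E d m"
    using scomps_eq_of_mem[OF compE_in_scomps[OF \<omega> X(2)] m(2)] by auto
  then have "reach_in (V - X) E m d" "reach_in (V - X) E d m"
    using reach_in_mono[of "V - X'" "V - X"] X(3) by blast+
  then show "d \<in> ?C" using scomps_eq_of_mem[OF compE_in_scomps[OF \<omega> X(1)] m(1)] by blast
qed

lemma ends_separated_by_superset:
  assumes \<omega>: "\<omega> \<in> ends V E" and \<eta>: "\<eta> \<in> ends V E" "\<omega> \<noteq> \<eta>" and X0: "X0 \<in> fsets V"
  shows "\<exists>X\<in>fsets V. X0 \<subseteq> X \<and> compE V E X \<omega> \<noteq> compE V E X \<eta>"
proof -
  obtain X where X: "X \<in> fsets V" "compE V E X \<omega> \<noteq> compE V E X \<eta>"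
    using ends_separated[OF assms(1-3)] by blast
  let ?X = "X \<union> X0"
  have X': "?X \<in> fsets V" using X(1) X0 unfolding fsets_def by auto
  have "compE V E ?X \<omega> \<subseteq> compE V E X \<omega>" "compE V E ?X \<eta> \<subseteq> compE V E X \<eta>"
    using compE_antimono[OF \<omega> X(1) X'] compE_antimono[OF \<eta>(1) X(1) X'] by auto
  moreover have "compE V E X \<omega> \<inter> compE V E X \<eta> = {}"
    using scomps_unique[OF compE_in_scomps[OF \<omega> X(1)] compE_in_scomps[OF \<eta>(1) X(1)]] X(2) by blast
  moreover have "compE V E ?X \<omega> \<noteq> {}" by (rule scomps_nonempty[OF compE_in_scomps[OF \<omega> X']])
  ultimately show ?thesis using X' by blast
qed

lemma admissible_common_separator:
  assumes "admissible V E P"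
  obtains X0 where "X0 \<in> fsets V" "\<And>p q. p \<in> P \<Longrightarrow> q \<in> P \<Longrightarrow> p \<noteq> q \<Longrightarrow> separates V E X0 p q"
proof -
  have "finite P" "\<forall>p\<in>P. \<forall>q\<in>P. p \<noteq> q \<longrightarrow> (\<exists>Y\<in>fsets V. separates V E Y p q)"
    using assms unfolding admissible_def by auto
  then obtain Y where Y: "\<And>p q. p \<in> P \<Longrightarrow> q \<in> P \<Longrightarrow> p \<noteq> q \<Longrightarrow> Y p q \<in> fsets V \<and> separates V E (Y p q) p q"
    by metis
  define X0 where "X0 = (\<Union>p\<in>P. \<Union>q\<in>P - {p}. Y p q)"
  have "X0 \<in> fsets V" using Y \<open>finite P\<close> unfolding X0_def fsets_def by auto
  moreover have "separates V E X0 p q" if "p \<in> P" "q \<in> P" "p \<noteq> q" for p q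
    using separates_mono[of "Y p q" X0] Y[OF that] that unfolding X0_def by blast
  ultimately show thesis using that by blast
qed

section \<open>Edges, the map phi and the basic open sets\<close>

lemma limit_edges_cases:
  assumes "(x, y) \<in> limit_edges V E"
  obtains (ends) \<omega> \<eta> where "x = NE \<omega>" "y = NE \<eta>" "\<omega> \<in> ends V E" "\<eta> \<in> ends V E" "\<omega> \<noteq> \<eta>"
      "\<And>X. X \<in> fsets V \<Longrightarrow> compE V E X \<omega> \<noteq> compE V E X \<eta> \<Longrightarrow>
         \<exists>(a, b)\<in>E. a \<in> compE V E X \<omega> \<and> b \<in> compE V E X \<eta>"
  | (vertex_end) v \<omega> where "x = NV v" "y = NE \<omega>" "v \<in> V" "\<omega> \<in> ends V E"
      "\<And>X. X \<in> fsets V \<Longrightarrow> v \<notin> compE V E X \<omega> \<Longrightarrow> \<exists>b. (v, b) \<in> E \<and> b \<in> compE V E X \<omega>"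
  | (end_vertex) v \<omega> where "x = NE \<omega>" "y = NV v" "v \<in> V" "\<omega> \<in> ends V E"
      "\<And>X. X \<in> fsets V \<Longrightarrow> v \<notin> compE V E X \<omega> \<Longrightarrow> \<exists>a. (a, v) \<in> E \<and> a \<in> compE V E X \<omega>"
  using assms unfolding limit_edges_def
proof (elim UnE CollectE exE conjE)
  fix \<omega> \<eta> assume "(x, y) = (NE \<omega>, NE \<eta>)" "\<omega> \<in> ends V E" "\<eta> \<in> ends V E" "\<omega> \<noteq> \<eta>"
    "\<forall>X\<in>fsets V. compE V E X \<omega> \<noteq> compE V E X \<eta> \<longrightarrow>
         (\<exists>(a, b)\<in>E. a \<in> compE V E X \<omega> \<and> b \<in> compE V E X \<eta>)"
  then show thesis using ends by simp
next
  fix v \<omega> assume "(x, y) = (NV v, NE \<omega>)" "v \<in> V" "\<omega> \<in> ends V E"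
    "\<forall>X\<in>fsets V. v \<notin> compE V E X \<omega> \<longrightarrow> (\<exists>b. (v, b) \<in> E \<and> b \<in> compE V E X \<omega>)"
  then show thesis using vertex_end by simp
next
  fix v \<omega> assume "(x, y) = (NE \<omega>, NV v)" "v \<in> V" "\<omega> \<in> ends V E"
    "\<forall>X\<in>fsets V. v \<notin> compE V E X \<omega> \<longrightarrow> (\<exists>a. (a, v) \<in> E \<and> a \<in> compE V E X \<omega>)"
  then show thesis using end_vertex by simp
qed

lemma all_edges_cases:
  assumes "(x, y) \<in> all_edges V E"
  obtains (edge) u w where "x = NV u" "y = NV w" "(u, w) \<in> E"
  | (limit) "(x, y) \<in> limit_edges V E"
  using assms unfolding all_edges_def by blast

definition qedge_of :: "('v \<times> 'v) set \<Rightarrow> 'v set set \<Rightarrow> 'v node \<Rightarrow> 'v node \<Rightarrow> 'v qedge" where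
  "qedge_of E P x y = (case (x, y) of
       (NV u, NV w) \<Rightarrow>
         if finite (edges_between E (cls P u) (cls P w)) then QCopy (u, w)
         else QQuot (cls P u) (cls P w)
     | _ \<Rightarrow> QQuot (node_cls P x) (node_cls P y))"

lemma node_cls_NV [simp]: "node_cls P (NV v) = cls P v"
  by (simp add: node_cls_def)

lemma phi_Node: "phi E P (Node x) = QV (node_cls P x)"
  by (simp add: phi_def)

lemma phi_Inner:
  "phi E P (Inner (x, y) t) =
     (if node_cls P x = node_cls P y then QV (node_cls P x) else QI (qedge_of E P x y) t)"
  unfolding phi_def qedge_of_def by (cases x; cases y) simp_all

lemma qedge_of_infinite:
  "infinite (edges_between E (node_cls P x) (node_cls P y)) \<Longrightarrow>
     qedge_of E P x y = QQuot (node_cls P x) (node_cls P y)"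
  unfolding qedge_of_def node_cls_def by (cases x; cases y) simp_all

definition qstar :: "('v \<times> 'v) set \<Rightarrow> 'v set set \<Rightarrow> 'v set \<Rightarrow> real \<Rightarrow> 'v qpt set" where
  "qstar E P p \<epsilon> = {QV p}
     \<union> {QI e t | e t. e \<in> qedges E P \<and> qtail P e = p \<and> 0 < t \<and> t < \<epsilon>}
     \<union> {QI e t | e t. e \<in> qedges E P \<and> qhead P e = p \<and> 1 - \<epsilon> < t \<and> t < 1}"

lemma QBasis_cases:
  assumes "U \<in> QBasis E P"
  obtains (whole) "U = QPoints E P"
  | (star) p \<epsilon> where "p \<in> P" "0 < \<epsilon>" "\<epsilon> < 1" "U = qstar E P p \<epsilon>"
  | (interval) e a b where "e \<in> qedges E P" "U = {QI e t | t. a < t \<and> t < b}"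
  using assms unfolding QBasis_def qstar_def by blast

lemma QBasis_QI_nbhd:
  assumes U: "U \<in> QBasis E P" and q: "QI q t \<in> U"
  obtains \<delta> where "\<delta> > 0" "{QI q s | s. \<bar>s - t\<bar> < \<delta> \<and> 0 < s \<and> s < 1} \<subseteq> U"
  using U
proof (cases rule: QBasis_cases)
  case whole
  with q show thesis by (intro that[of 1]) (auto simp: QPoints_def)
next
  case (star p \<epsilon>)
  with q have "q \<in> qedges E P \<and> qtail P q = p \<and> 0 < t \<and> t < \<epsilon>
      \<or> q \<in> qedges E P \<and> qhead P q = p \<and> 1 - \<epsilon> < t \<and> t < 1"
    unfolding qstar_def by auto
  then show thesis
  proof
    assume "q \<in> qedges E P \<and> qtail P q = p \<and> 0 < t \<and> t < \<epsilon>"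
    with star show thesis by (intro that[of "\<epsilon> - t"]) (auto simp: qstar_def abs_less_iff)
  next
    assume "q \<in> qedges E P \<and> qhead P q = p \<and> 1 - \<epsilon> < t \<and> t < 1"
    with star show thesis by (intro that[of "t - (1 - \<epsilon>)"]) (auto simp: qstar_def abs_less_iff)
  qed
next
  case (interval e a b)
  with q show thesis by (intro that[of "min (t - a) (b - t)"]) (auto simp: abs_less_iff)
qed

lemma QBasis_QV_nbhd:
  assumes U: "U \<in> QBasis E P" and p: "QV p \<in> U"
  obtains \<epsilon> where "0 < \<epsilon>" "\<epsilon> < 1" "qstar E P p \<epsilon> \<subseteq> U"
  using U
proof (cases rule: QBasis_cases)
  case whole
  with p show thesis by (intro that[of "1/2"]) (auto simp: QPoints_def qstar_def)
next
  case (star p' \<epsilon>)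
  with p have "p' = p" by (auto simp: qstar_def)
  with star show thesis using that by blast
qed (use p in auto)

lemma DBasis_vstar: "v \<in> V \<Longrightarrow> 0 < \<epsilon> \<Longrightarrow> \<epsilon> < 1 \<Longrightarrow> vstar V E v \<epsilon> \<in> DBasis V E"
  unfolding DBasis_def Un_iff mem_Collect_eq by blast

lemma DBasis_interval:
  "(u, w) \<in> E \<Longrightarrow> 0 \<le> a \<Longrightarrow> a < b \<Longrightarrow> b \<le> 1 \<Longrightarrow>
     {Inner (NV u, NV w) t | t. a < t \<and> t < b} \<in> DBasis V E"
  unfolding DBasis_def Un_iff mem_Collect_eq by blast

lemma DBasis_hatC:
  "X \<in> fsets V \<Longrightarrow> \<omega> \<in> ends V E \<Longrightarrow> 0 < \<epsilon> \<Longrightarrow> \<epsilon> < 1 \<Longrightarrow> hatC V E X \<omega> \<epsilon> \<in> DBasis V E"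
  unfolding DBasis_def Un_iff mem_Collect_eq by blast

lemma DBasis_band_ends:
  "(NE \<omega>, NE \<eta>) \<in> limit_edges V E \<Longrightarrow> X \<in> fsets V \<Longrightarrow> compE V E X \<omega> \<noteq> compE V E X \<eta> \<Longrightarrow>
     0 < z \<Longrightarrow> z < 1 \<Longrightarrow> 0 < \<epsilon> \<Longrightarrow>
     band V E (node_in V E X (compE V E X \<omega>)) (node_in V E X (compE V E X \<eta>)) z \<epsilon> \<in> DBasis V E"
  unfolding DBasis_def Un_iff mem_Collect_eq by (rule disjI1, rule disjI1, intro disjI2 exI conjI[OF refl]) auto

lemma DBasis_band_vertex_end:
  "(NV v, NE \<omega>) \<in> limit_edges V E \<Longrightarrow> X \<in> fsets V \<Longrightarrow> v \<in> X \<Longrightarrow> 0 < z \<Longrightarrow> z < 1 \<Longrightarrow> 0 < \<epsilon> \<Longrightarrow>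
     band V E (\<lambda>x. x = NV v) (node_in V E X (compE V E X \<omega>)) z \<epsilon> \<in> DBasis V E"
  unfolding DBasis_def Un_iff mem_Collect_eq by (rule disjI1, intro disjI2 exI conjI[OF refl]) auto

lemma DBasis_band_end_vertex:
  "(NE \<omega>, NV v) \<in> limit_edges V E \<Longrightarrow> X \<in> fsets V \<Longrightarrow> v \<in> X \<Longrightarrow> 0 < z \<Longrightarrow> z < 1 \<Longrightarrow> 0 < \<epsilon> \<Longrightarrow>
     band V E (node_in V E X (compE V E X \<omega>)) (\<lambda>x. x = NV v) z \<epsilon> \<in> DBasis V E"
  unfolding DBasis_def Un_iff mem_Collect_eq by (intro disjI2 exI conjI[OF refl]) auto

lemma Union_DBasis: "\<Union>(DBasis V E) = DPoints V E"
proof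
  show "DPoints V E \<subseteq> \<Union>(DBasis V E)" unfolding DBasis_def by blast
  have "B \<subseteq> DPoints V E" if "B \<in> DBasis V E" for B
    using that unfolding DBasis_def DPoints_def vstar_def hatC_def band_def Let_def all_edges_def nodes_def
    by auto
  then show "\<Union>(DBasis V E) \<subseteq> DPoints V E" by blast
qed

section \<open>Continuity\<close>

locale separated_partition =
  fixes V :: "'v set" and E :: "('v \<times> 'v) set" and P :: "'v set set" and X0 :: "'v set"
  assumes digraph: "digraph V E" and admissible: "admissible V E P"
    and X0_fsets: "X0 \<in> fsets V"
    and X0_separates: "\<And>p q. p \<in> P \<Longrightarrow> q \<in> P \<Longrightarrow> p \<noteq> q \<Longrightarrow> separates V E X0 p q"
begin

lemma edge_in_V: "(a, b) \<in> E \<Longrightarrow> a \<in> V \<and> b \<in> V"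
  using digraph unfolding digraph_def by blast

lemma classes_disjoint: "p \<in> P \<Longrightarrow> q \<in> P \<Longrightarrow> x \<in> p \<Longrightarrow> x \<in> q \<Longrightarrow> p = q"
  using admissible unfolding admissible_def by (meson disjoint_iff)

lemma cls_eqI: "v \<in> p \<Longrightarrow> p \<in> P \<Longrightarrow> cls P v = p"
  unfolding cls_def by (rule the_equality) (use classes_disjoint in blast)+

lemma cls_props:
  assumes "v \<in> V"
  shows cls_in_P: "cls P v \<in> P" and mem_cls: "v \<in> cls P v"
proof -
  have "\<Union>P = V" using admissible unfolding admissible_def by simp
  then obtain p where "p \<in> P" "v \<in> p" using assms by blast
  then show "cls P v \<in> P" "v \<in> cls P v" using cls_eqI by auto
qed

lemma scomp_subset_cls:
  assumes X: "X \<in> fsets V" "X0 \<subseteq> X" and C: "C \<in> scomps V E X" and c: "c \<in> C"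
  shows "C \<subseteq> cls P c"
proof
  fix d assume d: "d \<in> C"
  have V: "c \<in> V" "d \<in> V" using scomps_subset[OF C] c d by auto
  have "reach_in (V - X0) E c d \<and> reach_in (V - X0) E d c"
    using scomps_eq_of_mem[OF C c] d reach_in_mono[of "V - X" "V - X0"] X(2) by blast
  then have "\<not> separates V E X0 (cls P c) (cls P d)"
    using mem_cls V unfolding separates_def by blast
  then have "cls P d = cls P c" using X0_separates cls_in_P V by metis
  then show "d \<in> cls P c" using mem_cls V by metis
qed

lemma end_class:
  assumes \<omega>: "\<omega> \<in> ends V E" and X: "X \<in> fsets V" "X0 \<subseteq> X"
  shows end_class_in_P: "node_cls P (NE \<omega>) \<in> P"
    and compE_subset_end_class: "compE V E X \<omega> \<subseteq> node_cls P (NE \<omega>)"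
proof -
  let ?C = "compE V E X \<omega>"
  obtain c where c: "c \<in> ?C" using scomps_nonempty[OF compE_in_scomps[OF \<omega> X(1)]] by blast
  have cV: "c \<in> V" using scomps_subset[OF compE_in_scomps[OF \<omega> X(1)]] c by blast
  have Cc: "?C \<subseteq> cls P c" by (rule scomp_subset_cls[OF X compE_in_scomps[OF \<omega> X(1)] c])
  then have tails: "tail_in S (cls P c)" if "S \<in> \<omega>" for S
    using tail_in_mono tail_in_compE[OF \<omega> X(1) that] by blast
  obtain R where R: "R \<in> \<omega>" using ends_obtain_rep[OF \<omega>] by blast
  have "node_cls P (NE \<omega>) = cls P c"
    unfolding node_cls_def node.case
  proof (rule the_equality)
    show "cls P c \<in> P \<and> (\<forall>S\<in>\<omega>. tail_in S (cls P c))" using cls_in_P[OF cV] tails by blast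
  next
    fix p assume "p \<in> P \<and> (\<forall>S\<in>\<omega>. tail_in S p)"
    then show "p = cls P c"
      using tail_in_meet[OF _ tails[OF R]] R classes_disjoint cls_in_P[OF cV] by blast
  qed
  then show "node_cls P (NE \<omega>) \<in> P" "?C \<subseteq> node_cls P (NE \<omega>)" using cls_in_P[OF cV] Cc by auto
qed

lemma node_cls_in_P: "x \<in> nodes V E \<Longrightarrow> node_cls P x \<in> P"
  unfolding nodes_def using end_class_in_P[OF _ X0_fsets] cls_in_P by auto

lemma node_in_node_cls:
  assumes X: "X \<in> fsets V" "X0 \<subseteq> X" and \<omega>: "\<omega> \<in> ends V E"
    and x: "node_in V E X (compE V E X \<omega>) x"
  shows "node_cls P x = node_cls P (NE \<omega>)"
proof (cases x)
  case (NV v)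
  then have "v \<in> node_cls P (NE \<omega>)"
    using x compE_subset_end_class[OF \<omega> X] unfolding node_in_def by auto
  then show ?thesis using NV cls_eqI end_class_in_P[OF \<omega> X] by simp
next
  case (NE \<eta>)
  then have \<eta>: "\<eta> \<in> ends V E" "compE V E X \<eta> = compE V E X \<omega>"
    using x unfolding node_in_def by auto
  obtain c where "c \<in> compE V E X \<omega>"
    using scomps_nonempty[OF compE_in_scomps[OF \<omega> X(1)]] by blast
  then show ?thesis
    using NE \<eta> \<omega> classes_disjoint compE_subset_end_class[OF _ X] end_class_in_P[OF _ X]
    by (metis subsetD)
qed

lemma all_edges_nodes:
  assumes "(x, y) \<in> all_edges V E"
  shows "x \<in> nodes V E \<and> y \<in> nodes V E"
  using assms
proof (cases rule: all_edges_cases)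
  case (edge u w)
  then show ?thesis using edge_in_V unfolding nodes_def by auto
next
  case limit
  then show ?thesis by (cases rule: limit_edges_cases) (auto simp: nodes_def)
qed

lemma limit_edge_escapes:
  assumes L: "(x, y) \<in> limit_edges V E" and ne: "node_cls P x \<noteq> node_cls P y"
    and X: "X \<in> fsets V" "X0 \<subseteq> X"
  shows "\<exists>(a, b) \<in> edges_between E (node_cls P x) (node_cls P y). a \<notin> X \<or> b \<notin> X"
  using L
proof (cases rule: limit_edges_cases)
  case (ends \<omega> \<eta>)
  have sub: "compE V E X \<omega> \<subseteq> node_cls P x" "compE V E X \<eta> \<subseteq> node_cls P y"
    using compE_subset_end_class[OF _ X] ends by auto
  have "compE V E X \<omega> \<noteq> compE V E X \<eta>"
    using sub ne scomps_nonempty[OF compE_in_scomps[OF ends(3) X(1)]] classes_disjoint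
      end_class_in_P[OF _ X] ends(1-4) by blast
  then obtain a b where ab: "(a, b) \<in> E" "a \<in> compE V E X \<omega>" "b \<in> compE V E X \<eta>"
    using ends(6) X(1) by blast
  moreover have "a \<notin> X" using scomps_subset[OF compE_in_scomps[OF ends(3) X(1)]] ab(2) by blast
  ultimately show ?thesis using sub unfolding edges_between_def by blast
next
  case (vertex_end v \<omega>)
  let ?X = "insert v X"
  have X': "?X \<in> fsets V" "X0 \<subseteq> ?X" using X vertex_end(3) unfolding fsets_def by auto
  have sub: "compE V E ?X \<omega> \<subseteq> V - ?X"
    by (rule scomps_subset[OF compE_in_scomps[OF vertex_end(4) X'(1)]])
  then obtain b where b: "(v, b) \<in> E" "b \<in> compE V E ?X \<omega>"
    using vertex_end(5)[OF X'(1)] by blast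
  moreover have "v \<in> node_cls P x" "b \<in> node_cls P y"
    using vertex_end mem_cls compE_subset_end_class[OF vertex_end(4) X'] b(2) by auto
  ultimately show ?thesis using sub unfolding edges_between_def by blast
next
  case (end_vertex v \<omega>)
  let ?X = "insert v X"
  have X': "?X \<in> fsets V" "X0 \<subseteq> ?X" using X end_vertex(3) unfolding fsets_def by auto
  have sub: "compE V E ?X \<omega> \<subseteq> V - ?X"
    by (rule scomps_subset[OF compE_in_scomps[OF end_vertex(4) X'(1)]])
  then obtain a where a: "(a, v) \<in> E" "a \<in> compE V E ?X \<omega>"
    using end_vertex(5)[OF X'(1)] by blast
  moreover have "a \<in> node_cls P x" "v \<in> node_cls P y"
    using end_vertex mem_cls compE_subset_end_class[OF end_vertex(4) X'] a(2) by auto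
  ultimately show ?thesis using sub unfolding edges_between_def by blast
qed

lemma limit_edge_infinite:
  assumes "(x, y) \<in> limit_edges V E" "node_cls P x \<noteq> node_cls P y"
  shows "infinite (edges_between E (node_cls P x) (node_cls P y))"
proof
  let ?F = "edges_between E (node_cls P x) (node_cls P y)"
  assume "finite ?F"
  then have "X0 \<union> fst ` ?F \<union> snd ` ?F \<in> fsets V"
    using X0_fsets edge_in_V unfolding fsets_def edges_between_def by fastforce
  then show False using limit_edge_escapes[OF assms, of "X0 \<union> fst ` ?F \<union> snd ` ?F"] by force
qed

lemma qedge_of_props:
  assumes e: "(x, y) \<in> all_edges V E" and ne: "node_cls P x \<noteq> node_cls P y"
  shows qedge_of_in_qedges: "qedge_of E P x y \<in> qedges E P"
    and qtail_qedge_of: "qtail P (qedge_of E P x y) = node_cls P x"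
    and qhead_qedge_of: "qhead P (qedge_of E P x y) = node_cls P y"
proof -
  have P: "node_cls P x \<in> P" "node_cls P y \<in> P" using all_edges_nodes[OF e] node_cls_in_P by auto
  have "qedge_of E P x y \<in> qedges E P \<and> qtail P (qedge_of E P x y) = node_cls P x
      \<and> qhead P (qedge_of E P x y) = node_cls P y"
    using e
  proof (cases rule: all_edges_cases)
    case (edge u w)
    then show ?thesis using ne P unfolding qedges_def qedge_of_def by auto
  next
    case limit
    have inf: "infinite (edges_between E (node_cls P x) (node_cls P y))"
      by (rule limit_edge_infinite[OF limit ne])
    then show ?thesis using P ne unfolding qedge_of_infinite[OF inf] qedges_def by auto
  qed
  then show "qedge_of E P x y \<in> qedges E P" "qtail P (qedge_of E P x y) = node_cls P x"
    "qhead P (qedge_of E P x y) = node_cls P y" by auto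
qed

lemma phi_DPoints:
  assumes "z \<in> DPoints V E"
  shows "phi E P z \<in> QPoints E P"
proof -
  consider (node) x where "z = Node x" "x \<in> nodes V E"
    | (inner) x y t where "z = Inner (x, y) t" "(x, y) \<in> all_edges V E" "0 < t" "t < 1"
    using assms unfolding DPoints_def by auto
  then show ?thesis
  proof cases
    case node
    then show ?thesis using node_cls_in_P unfolding QPoints_def by (simp add: phi_Node)
  next
    case inner
    then show ?thesis
      using node_cls_in_P all_edges_nodes qedge_of_in_qedges unfolding QPoints_def
      by (auto simp: phi_Inner)
  qed
qed

lemma phi_Inner_limit_cong:
  assumes "(x, y) \<in> limit_edges V E"
    and "node_cls P x' = node_cls P x" "node_cls P y' = node_cls P y"
  shows "phi E P (Inner (x', y') s) = phi E P (Inner (x, y) s)"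
proof (cases "node_cls P x = node_cls P y")
  case False
  then have "infinite (edges_between E (node_cls P x) (node_cls P y))"
    using limit_edge_infinite[OF assms(1)] by blast
  then show ?thesis
    using False assms(2,3) qedge_of_infinite[of E P x y] qedge_of_infinite[of E P x' y']
    by (simp add: phi_Inner)
qed (use assms in \<open>simp add: phi_Inner\<close>)

lemma limit_edge_band:
  assumes "(x, y) \<in> limit_edges V E"
  obtains Pt Ph where "Pt x" "Ph y"
    "\<And>x'. Pt x' \<Longrightarrow> node_cls P x' = node_cls P x" "\<And>y'. Ph y' \<Longrightarrow> node_cls P y' = node_cls P y"
    "\<And>t \<delta>. 0 < t \<Longrightarrow> t < 1 \<Longrightarrow> 0 < \<delta> \<Longrightarrow> band V E Pt Ph t \<delta> \<in> DBasis V E"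
  using assms
proof (cases rule: limit_edges_cases)
  case (ends \<omega> \<eta>)
  obtain X where X: "X \<in> fsets V" "X0 \<subseteq> X" "compE V E X \<omega> \<noteq> compE V E X \<eta>"
    using ends_separated_by_superset[OF ends(3-5) X0_fsets] by blast
  show thesis
  proof (rule that[of "node_in V E X (compE V E X \<omega>)" "node_in V E X (compE V E X \<eta>)"])
    show "node_in V E X (compE V E X \<omega>) x" "node_in V E X (compE V E X \<eta>) y"
      using ends unfolding node_in_def by auto
    show "node_cls P x' = node_cls P x" if "node_in V E X (compE V E X \<omega>) x'" for x'
      using node_in_node_cls[OF X(1,2) ends(3) that] ends(1) by simp
    show "node_cls P y' = node_cls P y" if "node_in V E X (compE V E X \<eta>) y'" for y'
      using node_in_node_cls[OF X(1,2) ends(4) that] ends(2) by simp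
    show "band V E (node_in V E X (compE V E X \<omega>)) (node_in V E X (compE V E X \<eta>)) t \<delta> \<in> DBasis V E"
      if "0 < t" "t < 1" "0 < \<delta>" for t \<delta>
      using DBasis_band_ends[OF _ X(1) X(3) that] assms ends(1,2) by simp
  qed
next
  case (vertex_end v \<omega>)
  let ?X = "insert v X0"
  have X: "?X \<in> fsets V" "X0 \<subseteq> ?X" using X0_fsets vertex_end(3) unfolding fsets_def by auto
  show thesis
  proof (rule that[of "\<lambda>x'. x' = NV v" "node_in V E ?X (compE V E ?X \<omega>)"])
    show "node_in V E ?X (compE V E ?X \<omega>) y" using vertex_end unfolding node_in_def by auto
    show "node_cls P y' = node_cls P y" if "node_in V E ?X (compE V E ?X \<omega>) y'" for y'
      using node_in_node_cls[OF X vertex_end(4) that] vertex_end(2) by simp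
    show "band V E (\<lambda>x'. x' = NV v) (node_in V E ?X (compE V E ?X \<omega>)) t \<delta> \<in> DBasis V E"
      if "0 < t" "t < 1" "0 < \<delta>" for t \<delta>
      using DBasis_band_vertex_end[OF _ X(1) insertI1 that] assms vertex_end(1,2) by simp
  qed (use vertex_end in simp_all)
next
  case (end_vertex v \<omega>)
  let ?X = "insert v X0"
  have X: "?X \<in> fsets V" "X0 \<subseteq> ?X" using X0_fsets end_vertex(3) unfolding fsets_def by auto
  show thesis
  proof (rule that[of "node_in V E ?X (compE V E ?X \<omega>)" "\<lambda>y'. y' = NV v"])
    show "node_in V E ?X (compE V E ?X \<omega>) x" using end_vertex unfolding node_in_def by auto
    show "node_cls P x' = node_cls P x" if "node_in V E ?X (compE V E ?X \<omega>) x'" for x'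
      using node_in_node_cls[OF X end_vertex(4) that] end_vertex(1) by simp
    show "band V E (node_in V E ?X (compE V E ?X \<omega>)) (\<lambda>y'. y' = NV v) t \<delta> \<in> DBasis V E"
      if "0 < t" "t < 1" "0 < \<delta>" for t \<delta>
      using DBasis_band_end_vertex[OF _ X(1) insertI1 that] assms end_vertex(1,2) by simp
  qed (use end_vertex in simp_all)
qed

lemma edge_point_nbhd:
  assumes e: "(x, y) \<in> all_edges V E" and t: "0 < t" "t < 1" and \<delta>: "0 < \<delta>"
  obtains B where "B \<in> DBasis V E" "Inner (x, y) t \<in> B"
    "\<And>z. z \<in> B \<Longrightarrow> \<exists>s. \<bar>s - t\<bar> < \<delta> \<and> 0 < s \<and> s < 1 \<and> phi E P z = phi E P (Inner (x, y) s)"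
  using e
proof (cases rule: all_edges_cases)
  case (edge u w)
  let ?B = "{Inner (NV u, NV w) s | s. max 0 (t - \<delta>) < s \<and> s < min 1 (t + \<delta>)}"
  have "?B \<in> DBasis V E"
    using DBasis_interval[OF edge(3), of "max 0 (t - \<delta>)" "min 1 (t + \<delta>)" V] t \<delta> by simp
  then show thesis
  proof (rule that)
    show "Inner (x, y) t \<in> ?B" using edge t \<delta> by auto
    fix z assume "z \<in> ?B"
    then obtain s where "z = Inner (x, y) s" "\<bar>s - t\<bar> < \<delta>" "0 < s" "s < 1"
      using edge by (auto simp: abs_less_iff)
    then show "\<exists>s. \<bar>s - t\<bar> < \<delta> \<and> 0 < s \<and> s < 1 \<and> phi E P z = phi E P (Inner (x, y) s)"
      by blast
  qed
next
  case limit
  obtain Pt Ph where band: "Pt x" "Ph y"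
    "\<And>x'. Pt x' \<Longrightarrow> node_cls P x' = node_cls P x" "\<And>y'. Ph y' \<Longrightarrow> node_cls P y' = node_cls P y"
    "band V E Pt Ph t \<delta> \<in> DBasis V E"
    using limit_edge_band[OF limit] t \<delta> by metis
  show thesis
  proof (rule that[OF band(5)])
    show "Inner (x, y) t \<in> band V E Pt Ph t \<delta>" using e t \<delta> band(1,2) unfolding band_def by auto
  next
    fix z assume "z \<in> band V E Pt Ph t \<delta>"
    then obtain x' y' s where "z = Inner (x', y') s" "Pt x'" "Ph y'" "\<bar>s - t\<bar> < \<delta>" "0 < s" "s < 1"
      unfolding band_def by auto
    then show "\<exists>s. \<bar>s - t\<bar> < \<delta> \<and> 0 < s \<and> s < 1 \<and> phi E P z = phi E P (Inner (x, y) s)"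
      using phi_Inner_limit_cong[OF limit] band(3,4) by metis
  qed
qed

lemma phi_Inner_in_qstar:
  assumes e: "(x, y) \<in> all_edges V E"
    and near: "node_cls P x = p \<and> 0 < t \<and> t < \<epsilon> \<or> node_cls P y = p \<and> 1 - \<epsilon> < t \<and> t < 1"
  shows "phi E P (Inner (x, y) t) \<in> qstar E P p \<epsilon>"
proof (cases "node_cls P x = node_cls P y")
  case True
  then show ?thesis using near by (auto simp: phi_Inner qstar_def)
next
  case False
  then show ?thesis using near qedge_of_props[OF e False] by (auto simp: phi_Inner qstar_def)
qed

lemma phi_vstar_subset: "phi E P ` vstar V E v \<epsilon> \<subseteq> qstar E P (cls P v) \<epsilon>"
proof (rule image_subsetI)
  fix z assume "z \<in> vstar V E v \<epsilon>"
  then consider "z = Node (NV v)"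
    | x y t where "z = Inner (x, y) t" "(x, y) \<in> all_edges V E" "x = NV v" "0 < t" "t < \<epsilon>"
    | x y t where "z = Inner (x, y) t" "(x, y) \<in> all_edges V E" "y = NV v" "1 - \<epsilon> < t" "t < 1"
    unfolding vstar_def by auto
  then show "phi E P z \<in> qstar E P (cls P v) \<epsilon>"
  proof cases
    case 1
    then show ?thesis by (simp add: phi_Node qstar_def)
  qed (simp_all add: phi_Inner_in_qstar)
qed

lemma phi_hatC_subset:
  assumes \<omega>: "\<omega> \<in> ends V E" and X: "X \<in> fsets V" "X0 \<subseteq> X"
  shows "phi E P ` hatC V E X \<omega> \<epsilon> \<subseteq> qstar E P (node_cls P (NE \<omega>)) \<epsilon>"
proof (rule image_subsetI)
  let ?inC = "node_in V E X (compE V E X \<omega>)"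
  have cls: "node_cls P x = node_cls P (NE \<omega>)" if "?inC x" for x
    by (rule node_in_node_cls[OF X \<omega> that])
  fix z assume "z \<in> hatC V E X \<omega> \<epsilon>"
  then consider (node) x where "z = Node x" "?inC x"
    | (inside) x y t where "z = Inner (x, y) t" "?inC x" "?inC y"
    | (tail) x y t where "z = Inner (x, y) t" "(x, y) \<in> all_edges V E" "?inC x" "0 < t" "t < \<epsilon>"
    | (head) x y t where "z = Inner (x, y) t" "(x, y) \<in> all_edges V E" "?inC y" "1 - \<epsilon> < t" "t < 1"
    unfolding hatC_def Let_def by auto
  then show "phi E P z \<in> qstar E P (node_cls P (NE \<omega>)) \<epsilon>"
  proof cases
    case node
    then show ?thesis by (simp add: cls phi_Node qstar_def)
  next
    case inside
    then show ?thesis by (simp add: cls phi_Inner qstar_def)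
  qed (simp_all add: cls phi_Inner_in_qstar)
qed

lemma phi_QV_nbhd:
  assumes z: "z \<in> DPoints V E" and p: "phi E P z = QV p" and \<epsilon>: "0 < \<epsilon>" "\<epsilon> < 1"
  obtains B where "B \<in> DBasis V E" "z \<in> B" "phi E P ` B \<subseteq> qstar E P p \<epsilon>"
proof -
  consider (vertex) v where "z = Node (NV v)" "v \<in> V"
    | (end_node) \<omega> where "z = Node (NE \<omega>)" "\<omega> \<in> ends V E"
    | (inner) e t where "z = Inner e t" "e \<in> all_edges V E" "0 < t" "t < 1"
    using z unfolding DPoints_def nodes_def by blast
  then show thesis
  proof cases
    case vertex
    have "z \<in> vstar V E v \<epsilon>" unfolding vstar_def using vertex(1) by blast
    moreover have "p = cls P v" using p vertex(1) by (simp add: phi_Node)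
    ultimately show thesis using that[OF DBasis_vstar[OF vertex(2) \<epsilon>]] phi_vstar_subset by blast
  next
    case end_node
    have "z \<in> hatC V E X0 \<omega> \<epsilon>"
      unfolding hatC_def Let_def node_in_def nodes_def using end_node by auto
    moreover have "p = node_cls P (NE \<omega>)" using p end_node(1) by (simp add: phi_Node)
    ultimately show thesis
      using that[OF DBasis_hatC[OF X0_fsets end_node(2) \<epsilon>]] phi_hatC_subset[OF end_node(2) X0_fsets]
      by blast
  next
    case inner
    obtain x y where e: "e = (x, y)" by (cases e)
    have "phi E P (Inner (x, y) t) = QV p" using p inner(1) e by simp
    then have cls: "node_cls P x = p" "node_cls P y = p" by (simp_all add: phi_Inner split: if_splits)
    obtain B where B: "B \<in> DBasis V E" "z \<in> B"
      "\<And>z'. z' \<in> B \<Longrightarrow> \<exists>s. \<bar>s - t\<bar> < 1 \<and> 0 < s \<and> s < 1 \<and> phi E P z' = phi E P (Inner (x, y) s)"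
      using edge_point_nbhd[OF inner(2-4)[unfolded e] zero_less_one] inner(1) e by metis
    have "phi E P ` B \<subseteq> {QV p}" using B(3) cls by (force simp: phi_Inner)
    then show thesis using that[OF B(1,2)] unfolding qstar_def by blast
  qed
qed

lemma phi_QI_nbhd:
  assumes z: "z \<in> DPoints V E" and q: "phi E P z = QI q t" and \<delta>: "0 < \<delta>"
  obtains B where "B \<in> DBasis V E" "z \<in> B"
    "phi E P ` B \<subseteq> {QI q s | s. \<bar>s - t\<bar> < \<delta> \<and> 0 < s \<and> s < 1}"
proof -
  have "z \<notin> Node ` nodes V E" using q by (auto simp: phi_Node)
  then obtain e t' where inner: "z = Inner e t'" "e \<in> all_edges V E" "0 < t'" "t' < 1"
    using z unfolding DPoints_def by blast
  obtain x y where e: "e = (x, y)" by (cases e)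
  have "phi E P (Inner (x, y) t') = QI q t" using q inner(1) e by simp
  then have ne: "node_cls P x \<noteq> node_cls P y" and qe: "q = qedge_of E P x y" and "t' = t"
    by (simp_all add: phi_Inner split: if_splits)
  obtain B where B: "B \<in> DBasis V E" "z \<in> B"
    "\<And>z'. z' \<in> B \<Longrightarrow> \<exists>s. \<bar>s - t\<bar> < \<delta> \<and> 0 < s \<and> s < 1 \<and> phi E P z' = phi E P (Inner (x, y) s)"
    using edge_point_nbhd[OF inner(2-4)[unfolded e] \<delta>] inner(1) e \<open>t' = t\<close> by metis
  have "phi E P z' \<in> {QI q s | s. \<bar>s - t\<bar> < \<delta> \<and> 0 < s \<and> s < 1}" if z': "z' \<in> B" for z'
  proof -
    obtain s where "\<bar>s - t\<bar> < \<delta>" "0 < s" "s < 1" "phi E P z' = phi E P (Inner (x, y) s)"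
      using B(3)[OF z'] by blast
    then show ?thesis using ne qe by (auto simp: phi_Inner)
  qed
  with B(1,2) show thesis by (intro that) blast+
qed

theorem phi_continuous: "continuous_map (DTop V E) (QTop E P) (phi E P)"
  unfolding DTop_def QTop_def
proof (rule continuous_map_topology_generated_by_local)
  have "QPoints E P \<in> QBasis E P" unfolding QBasis_def by blast
  then show "phi E P ` \<Union>(DBasis V E) \<subseteq> \<Union>(QBasis E P)"
    using phi_DPoints unfolding Union_DBasis by blast
next
  fix U z assume U: "U \<in> QBasis E P" and "z \<in> \<Union>(DBasis V E)" and zU: "phi E P z \<in> U"
  then have z: "z \<in> DPoints V E" by (simp add: Union_DBasis)
  show "\<exists>B\<in>DBasis V E. z \<in> B \<and> phi E P ` B \<subseteq> U"
  proof (cases "phi E P z")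
    case (QV p)
    with zU have "QV p \<in> U" by simp
    then obtain \<epsilon> where \<epsilon>: "0 < \<epsilon>" "\<epsilon> < 1" "qstar E P p \<epsilon> \<subseteq> U"
      by (rule QBasis_QV_nbhd[OF U])
    obtain B where "B \<in> DBasis V E" "z \<in> B" "phi E P ` B \<subseteq> qstar E P p \<epsilon>"
      by (rule phi_QV_nbhd[OF z QV \<epsilon>(1,2)])
    then show ?thesis using \<epsilon>(3) by blast
  next
    case (QI q t)
    with zU have "QI q t \<in> U" by simp
    then obtain \<delta> where \<delta>: "\<delta> > 0" "{QI q s | s. \<bar>s - t\<bar> < \<delta> \<and> 0 < s \<and> s < 1} \<subseteq> U"
      by (rule QBasis_QI_nbhd[OF U])
    obtain B where "B \<in> DBasis V E" "z \<in> B"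
      "phi E P ` B \<subseteq> {QI q s | s. \<bar>s - t\<bar> < \<delta> \<and> 0 < s \<and> s < 1}"
      by (rule phi_QI_nbhd[OF z QI \<delta>(1)])
    then show ?thesis using \<delta>(2) by blast
  qed
qed

end

theorem lemma4p2:
  fixes V :: "'v set" and E :: "('v \<times> 'v) set" and P :: "'v set set"
  assumes "digraph V E"
    and "admissible V E P"
  shows "continuous_map (DTop V E) (QTop E P) (phi E P)"
proof -
  obtain X0 where "X0 \<in> fsets V" "\<And>p q. p \<in> P \<Longrightarrow> q \<in> P \<Longrightarrow> p \<noteq> q \<Longrightarrow> separates V E X0 p q"
    using admissible_common_separator[OF assms(2)] by blast
  with assms interpret separated_partition V E P X0
    by unfold_locales
  show ?thesis by (rule phi_continuous)
qed

end
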